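(* For every positive integer $s$ there exist infinitely many (pairwise non-isomorphic) connected, essentially 2-edge connected graphs $G$ such that the graph obtained from $G$ by deleting all of its leaves is 2-connected, and $G^2$ has no $[2,2s]$-factor.
   Context: All graphs are finite, simple and undirected. The square $G^2$ of a graph $G$ is the graph on $V(G)$ in which two distinct vertices are adjacent iff their distance in $G$ is at most 2. A factor of $G$ is a spanning subgraph. A connected even factor is a connected factor in which every vertex has positive even degree. For a positive integer $s$, a $[2,2s]$-factor of $G$ is a connected even factor of $G$ in which every vertex has degree at most $2s$. A graph is essentially 2-edge connected if deleting fewer than 2 edges cannot result in (a graph with) two nontrivial components, i.e. components with at least one edge. A leaf is a vertex of degree 1. *)

theory Defs
  imports Main
begin

text \<open>A finite simple graph: a finite vertex set V and a set E of 2-element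
subsets of V.  Vertices are natural numbers (any countable type suffices for
finite graphs up to isomorphism).\<close>

type_synonym graph = "nat set \<times> nat set set"

definition verts :: "graph \<Rightarrow> nat set" where "verts G = fst G"
definition edges :: "graph \<Rightarrow> nat set set" where "edges G = snd G"

definition is_graph :: "graph \<Rightarrow> bool" where
  "is_graph G \<longleftrightarrow> finite (verts G) \<and>
     (\<forall>e\<in>edges G. \<exists>u v. e = {u, v} \<and> u \<noteq> v \<and> u \<in> verts G \<and> v \<in> verts G)"

definition adj :: "graph \<Rightarrow> nat \<Rightarrow> nat \<Rightarrow> bool" where
  "adj G u v \<longleftrightarrow> u \<noteq> v \<and> {u, v} \<in> edges G"

definition degree :: "graph \<Rightarrow> nat \<Rightarrow> nat" where
  "degree G v = card {e \<in> edges G. v \<in> e}"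

definition reach :: "graph \<Rightarrow> (nat \<times> nat) set" where
  "reach G = {(u, v). u \<in> verts G \<and> v \<in> verts G \<and> adj G u v}\<^sup>*"

definition connected :: "graph \<Rightarrow> bool" where
  "connected G \<longleftrightarrow> verts G \<noteq> {} \<and> (\<forall>u\<in>verts G. \<forall>v\<in>verts G. (u, v) \<in> reach G)"

definition induced :: "graph \<Rightarrow> nat set \<Rightarrow> graph" where
  "induced G S = (verts G \<inter> S, {e \<in> edges G. e \<subseteq> S})"

definition two_connected :: "graph \<Rightarrow> bool" where
  "two_connected G \<longleftrightarrow> card (verts G) \<ge> 3 \<and> connected G \<and>
     (\<forall>v\<in>verts G. connected (induced G (verts G - {v})))"

definition leaves :: "graph \<Rightarrow> nat set" where
  "leaves G = {v \<in> verts G. degree G v = 1}"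

definition delete_leaves :: "graph \<Rightarrow> graph" where
  "delete_leaves G = induced G (verts G - leaves G)"

definition two_nontrivial_components :: "graph \<Rightarrow> bool" where
  "two_nontrivial_components G \<longleftrightarrow>
     (\<exists>e1\<in>edges G. \<exists>e2\<in>edges G. \<exists>u\<in>e1. \<exists>v\<in>e2. (u, v) \<notin> reach G)"

definition ess_2_edge_connected :: "graph \<Rightarrow> bool" where
  "ess_2_edge_connected G \<longleftrightarrow>
     (\<forall>D \<subseteq> edges G. card D < 2 \<longrightarrow>
        \<not> two_nontrivial_components (verts G, edges G - D))"

definition square :: "graph \<Rightarrow> graph" where
  "square G = (verts G, {{u, v} | u v. u \<in> verts G \<and> v \<in> verts G \<and> u \<noteq> v \<and>
       (adj G u v \<or> (\<exists>w. adj G u w \<and> adj G w v))})"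

definition is_factor :: "graph \<Rightarrow> graph \<Rightarrow> bool" where
  "is_factor F G \<longleftrightarrow> verts F = verts G \<and> edges F \<subseteq> edges G"

definition connected_even_factor :: "graph \<Rightarrow> graph \<Rightarrow> bool" where
  "connected_even_factor F G \<longleftrightarrow> is_factor F G \<and> connected F \<and>
     (\<forall>v\<in>verts F. degree F v > 0 \<and> even (degree F v))"

definition two_2s_factor :: "nat \<Rightarrow> graph \<Rightarrow> graph \<Rightarrow> bool" where
  "two_2s_factor s F G \<longleftrightarrow> connected_even_factor F G \<and>
     (\<forall>v\<in>verts F. degree F v \<le> 2 * s)"

definition graph_iso :: "graph \<Rightarrow> graph \<Rightarrow> bool" where
  "graph_iso G H \<longleftrightarrow> (\<exists>f. bij_betw f (verts G) (verts H) \<and>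
     (\<forall>u\<in>verts G. \<forall>v\<in>verts G. {u, v} \<in> edges G \<longleftrightarrow> {f u, f v} \<in> edges H))"

end

theory Submission
  imports Defs
begin

text \<open>Take \<open>K\<^sub>2\<^sub>,\<^sub>m\<close> with hubs 0 and 1 and attach a pendant leaf to each of the other \<open>m\<close>
vertices. Deleting the leaves gives back \<open>K\<^sub>2\<^sub>,\<^sub>m\<close>, which is 2-connected, and no single edge
separates two edges of the graph. In the square, a leaf is adjacent only to its own neighbour and
to the two hubs; as it has even positive degree in a connected even factor \<open>F\<close>, it is joined
in \<open>F\<close> to a hub. These \<open>m\<close> edges are distinct, so the two hubs have total \<open>F\<close>-degree at
least \<open>m\<close>, which exceeds \<open>4s\<close> once \<open>m > 4s\<close>.\<close>

lemma finite_edges: "is_graph G \<Longrightarrow> finite (edges G)"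
  unfolding is_graph_def by (rule finite_subset[of _ "Pow (verts G)"]) auto

lemma empty_not_edge: "is_graph G \<Longrightarrow> {} \<notin> edges G"
  unfolding is_graph_def by blast

lemma adj_sym: "adj G u v \<Longrightarrow> adj G v u"
  unfolding adj_def by (auto simp: insert_commute)

lemma reach_refl: "(u, u) \<in> reach G"
  unfolding reach_def by (rule rtrancl_refl)

lemma reach_edge: "u \<in> verts G \<Longrightarrow> v \<in> verts G \<Longrightarrow> adj G u v \<Longrightarrow> (u, v) \<in> reach G"
  unfolding reach_def by (rule r_into_rtrancl) simp

lemma reach_trans: "(u, v) \<in> reach G \<Longrightarrow> (v, w) \<in> reach G \<Longrightarrow> (u, w) \<in> reach G"
  unfolding reach_def by (rule rtrancl_trans)

lemma reach_sym: "(u, v) \<in> reach G \<Longrightarrow> (v, u) \<in> reach G"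
proof -
  have "sym {(u, v). u \<in> verts G \<and> v \<in> verts G \<and> adj G u v}"
    by (auto simp: sym_def intro: adj_sym)
  then have "sym (reach G)"
    unfolding reach_def by (rule sym_rtrancl)
  then show "(u, v) \<in> reach G \<Longrightarrow> (v, u) \<in> reach G"
    by (auto simp: sym_def)
qed

lemma connectedI_root:
  assumes "r \<in> verts G" and "\<And>v. v \<in> verts G \<Longrightarrow> (r, v) \<in> reach G"
  shows "connected G"
  unfolding connected_def using assms reach_sym reach_trans by blast

lemma verts_induced [simp]: "verts (induced G S) = verts G \<inter> S"
  by (simp add: induced_def verts_def)

lemma adj_induced [simp]: "adj (induced G S) u v \<longleftrightarrow> adj G u v \<and> u \<in> S \<and> v \<in> S"
  by (auto simp: induced_def edges_def adj_def)

lemma verts_square [simp]: "verts (square G) = verts G"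
  by (simp add: square_def verts_def)

lemma edges_square:
  "edges (square G) = {{u, v} | u v. u \<in> verts G \<and> v \<in> verts G \<and> u \<noteq> v \<and>
     (adj G u v \<or> (\<exists>w. adj G u w \<and> adj G w v))}"
  by (simp add: square_def edges_def verts_def)

lemma finite_edges_square: "finite (verts G) \<Longrightarrow> finite (edges (square G))"
  by (rule finite_subset[of _ "Pow (verts G)"]) (auto simp: edges_square)

lemma square_edge_at_pendant:
  assumes pendant: "\<And>x. adj G p x \<longleftrightarrow> x = c"
    and e: "e \<in> edges (square G)" and "p \<in> e"
  shows "\<exists>w. e = {p, w} \<and> (w = c \<or> adj G c w)"
proof -
  have two_step: "w = c \<or> adj G c w" if "adj G p w \<or> (\<exists>x. adj G p x \<and> adj G x w)" for w
    using that pendant by metis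
  obtain u v where uv: "e = {u, v}" and walk: "adj G u v \<or> (\<exists>x. adj G u x \<and> adj G x v)"
    using e unfolding edges_square by blast
  from \<open>p \<in> e\<close> uv have "u = p \<or> v = p" by blast
  then show ?thesis
  proof
    assume "u = p"
    then show ?thesis using uv walk two_step by blast
  next
    assume "v = p"
    moreover from walk have "adj G v u \<or> (\<exists>x. adj G v x \<and> adj G x u)"
      using adj_sym by blast
    ultimately show ?thesis using uv two_step by (metis insert_commute)
  qed
qed

lemma degree_le_card:
  assumes "finite A" and "{e \<in> edges G. v \<in> e} \<subseteq> A"
  shows "degree G v \<le> card A"
  unfolding degree_def using assms by (rule card_mono)

lemma degree_eq_card_adj:
  assumes "is_graph G"
  shows "degree G v = card {x. adj G v x}"
proof -
  have "{e \<in> edges G. v \<in> e} = (\<lambda>x. {v, x}) ` {x. adj G v x}"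
    using assms unfolding is_graph_def adj_def by (fastforce simp: insert_commute)
  moreover have "inj_on (\<lambda>x. {v, x}) {x. adj G v x}"
    by (auto simp: inj_on_def doubleton_eq_iff adj_def)
  ultimately show ?thesis
    unfolding degree_def by (simp add: card_image)
qed

lemma two_2s_factor_degree:
  assumes "two_2s_factor s F G" and "v \<in> verts G"
  shows "2 \<le> degree F v" and "degree F v \<le> 2 * s"
proof -
  have "0 < degree F v" "even (degree F v)" "degree F v \<le> 2 * s"
    using assms unfolding two_2s_factor_def connected_even_factor_def is_factor_def by auto
  then show "2 \<le> degree F v" and "degree F v \<le> 2 * s"
    by (auto elim: evenE)
qed

lemma graph_iso_refl: "graph_iso G G"
  unfolding graph_iso_def by (auto intro: bij_betw_id)

lemma graph_iso_card_verts: "graph_iso G H \<Longrightarrow> card (verts G) = card (verts H)"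
  unfolding graph_iso_def by (blast intro: bij_betw_same_card)

definition delete_edge :: "graph \<Rightarrow> nat set \<Rightarrow> graph" where
  "delete_edge G d = (verts G, edges G - {d})"

lemma verts_delete_edge [simp]: "verts (delete_edge G d) = verts G"
  by (simp add: delete_edge_def verts_def)

lemma edges_delete_edge [simp]: "edges (delete_edge G d) = edges G - {d}"
  by (simp add: delete_edge_def edges_def)

lemma delete_edge_non_edge: "d \<notin> edges G \<Longrightarrow> delete_edge G d = G"
  by (simp add: delete_edge_def verts_def edges_def)

lemma reach_delete_edge:
  assumes "u \<in> verts G" "v \<in> verts G" "adj G u v" "{u, v} \<noteq> d"
  shows "(u, v) \<in> reach (delete_edge G d)"
  using assms by (intro reach_edge) (auto simp: adj_def)

lemma ess_2_edge_connectedI: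
  assumes G: "is_graph G"
    and root: "\<And>d. \<exists>r. \<forall>e \<in> edges G - {d}. \<forall>u \<in> e. (r, u) \<in> reach (delete_edge G d)"
  shows "ess_2_edge_connected G"
  unfolding ess_2_edge_connected_def
proof (intro allI impI)
  fix D assume D: "D \<subseteq> edges G" "card D < 2"
  obtain d where d: "edges G - D = edges G - {d}"
  proof (cases "D = {}")
    case True
    then show ?thesis using that[of "{}"] empty_not_edge[OF G] by auto
  next
    case False
    with D finite_subset[OF D(1) finite_edges[OF G]] have "card D = 1"
      by (metis One_nat_def card_0_eq less_2_cases)
    then show ?thesis using that by (metis card_1_singletonE)
  qed
  obtain r where r: "\<forall>e \<in> edges G - {d}. \<forall>u \<in> e. (r, u) \<in> reach (delete_edge G d)"
    using root by blast
  have deleted: "(verts G, edges G - D) = delete_edge G d"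
    by (simp add: delete_edge_def d)
  show "\<not> two_nontrivial_components (verts G, edges G - D)"
    unfolding deleted two_nontrivial_components_def
  proof clarify
    fix e1 e2 u v
    assume "e1 \<in> edges (delete_edge G d)" "e2 \<in> edges (delete_edge G d)" "u \<in> e1" "v \<in> e2"
      and "(u, v) \<notin> reach (delete_edge G d)"
    then show False
      using r reach_sym reach_trans by (metis edges_delete_edge)
  qed
qed

text \<open>\<open>K\<^sub>2\<^sub>,\<^sub>m\<close> on the hubs 0, 1 and the middle vertices \<open>2i+2\<close> (\<open>i < m\<close>), with the
leaf \<open>2i+3\<close> attached to the middle vertex \<open>2i+2\<close>.\<close>

definition pendant_K2m_edges :: "nat \<Rightarrow> nat set set" where
  "pendant_K2m_edges m = (\<Union>i<m. {{0, 2*i+2}, {1, 2*i+2}, {2*i+2, 2*i+3}})"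

definition pendant_K2m :: "nat \<Rightarrow> graph" where
  "pendant_K2m m = ({..<2*m+2}, pendant_K2m_edges m)"

lemma verts_pendant_K2m [simp]: "verts (pendant_K2m m) = {..<2*m+2}"
  by (simp add: pendant_K2m_def verts_def)

lemma edges_pendant_K2m [simp]: "edges (pendant_K2m m) = pendant_K2m_edges m"
  by (simp add: pendant_K2m_def edges_def)

lemma mem_pendant_K2m_edges:
  "e \<in> pendant_K2m_edges m \<longleftrightarrow>
     (\<exists>i<m. e = {0, 2*i+2} \<or> e = {1, 2*i+2} \<or> e = {2*i+2, 2*i+3})"
  by (auto simp: pendant_K2m_edges_def)

lemma is_graph_pendant_K2m: "is_graph (pendant_K2m m)"
  unfolding is_graph_def
proof (intro conjI ballI)
  fix e assume "e \<in> edges (pendant_K2m m)"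
  then obtain i where "i < m" "e = {0, 2*i+2} \<or> e = {1, 2*i+2} \<or> e = {2*i+2, 2*i+3}"
    by (auto simp: mem_pendant_K2m_edges)
  then show "\<exists>u v. e = {u, v} \<and> u \<noteq> v \<and> u \<in> verts (pendant_K2m m) \<and> v \<in> verts (pendant_K2m m)"
    by (elim disjE; intro exI conjI refl) auto
qed simp

lemma adj_pendant_K2m: "adj (pendant_K2m m) u v \<longleftrightarrow> {u, v} \<in> pendant_K2m_edges m"
  using is_graph_pendant_K2m
  unfolding adj_def is_graph_def edges_pendant_K2m doubleton_eq_iff by fastforce

lemma adj_pendant_K2m_leaf: "adj (pendant_K2m m) (2*i+3) x \<longleftrightarrow> i < m \<and> x = 2*i+2"
proof
  assume "adj (pendant_K2m m) (2*i+3) x"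
  then obtain k where "k < m" and
    "{2*i+3, x} = {0, 2*k+2} \<or> {2*i+3, x} = {1, 2*k+2} \<or> {2*i+3, x} = {2*k+2, 2*k+3}"
    unfolding adj_pendant_K2m mem_pendant_K2m_edges by blast
  then show "i < m \<and> x = 2*i+2"
    unfolding doubleton_eq_iff by auto presburger+
qed (auto simp: adj_pendant_K2m mem_pendant_K2m_edges insert_commute)

lemma adj_pendant_K2m_middle: "adj (pendant_K2m m) (2*i+2) x \<Longrightarrow> x = 0 \<or> x = 1 \<or> x = 2*i+3"
proof -
  assume "adj (pendant_K2m m) (2*i+2) x"
  then obtain k where
    "{2*i+2, x} = {0, 2*k+2} \<or> {2*i+2, x} = {1, 2*k+2} \<or> {2*i+2, x} = {2*k+2, 2*k+3}"
    unfolding adj_pendant_K2m mem_pendant_K2m_edges by blast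
  then show ?thesis
    unfolding doubleton_eq_iff by auto presburger
qed

lemma adj_pendant_K2m_hub:
  "i < m \<Longrightarrow> adj (pendant_K2m m) 0 (2*i+2)" "i < m \<Longrightarrow> adj (pendant_K2m m) 1 (2*i+2)"
  by (auto simp: adj_pendant_K2m mem_pendant_K2m_edges)

lemma pendant_K2m_vertex_cases:
  fixes v m :: nat
  assumes "v < 2*m+2"
  obtains "v = 0" | "v = 1" | i where "i < m" "v = 2*i+2" | i where "i < m" "v = 2*i+3"
proof -
  consider "v \<le> 1" | "v \<ge> 2" "even v" | "v \<ge> 2" "odd v" by linarith
  then show ?thesis
  proof cases
    case 2
    then obtain k where "v = 2*k" by (auto elim: evenE)
    with 2 assms have "k - 1 < m" "v = 2*(k-1)+2" by linarith+
    then show ?thesis by (rule that(3))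
  next
    case 3
    then obtain k where "v = 2*k+1" by (auto elim: oddE)
    with 3 assms have "k - 1 < m" "v = 2*(k-1)+3" by linarith+
    then show ?thesis by (rule that(4))
  qed (use that in linarith)
qed

lemma adj_pendant_K2m_verts: "adj (pendant_K2m m) u v \<Longrightarrow> u < 2*m+2 \<and> v < 2*m+2"
  unfolding adj_pendant_K2m mem_pendant_K2m_edges doubleton_eq_iff by auto

lemma degree_pendant_K2m_leaf: "i < m \<Longrightarrow> degree (pendant_K2m m) (2*i+3) = 1"
  by (simp add: degree_eq_card_adj[OF is_graph_pendant_K2m] adj_pendant_K2m_leaf)

lemma degree_pendant_K2m_ge_2:
  assumes "a \<noteq> b" "adj (pendant_K2m m) v a" "adj (pendant_K2m m) v b"
  shows "degree (pendant_K2m m) v \<ge> 2"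
proof -
  have "{a, b} \<subseteq> {x. adj (pendant_K2m m) v x}"
    using assms by auto
  moreover have "finite {x. adj (pendant_K2m m) v x}"
    using adj_pendant_K2m_verts by (auto intro: finite_subset[of _ "{..<2*m+2}"])
  ultimately have "card {a, b} \<le> card {x. adj (pendant_K2m m) v x}"
    by (rule card_mono[rotated])
  then show ?thesis
    using assms(1) by (simp add: degree_eq_card_adj[OF is_graph_pendant_K2m])
qed

lemma leaves_pendant_K2m:
  assumes "m \<ge> 2"
  shows "leaves (pendant_K2m m) = (\<lambda>i. 2*i+3) ` {..<m}"
proof (intro set_eqI iffI)
  fix v assume "v \<in> leaves (pendant_K2m m)"
  then have v: "v < 2*m+2" "degree (pendant_K2m m) v = 1"
    unfolding leaves_def by auto
  have hub: "adj (pendant_K2m m) h 2" "adj (pendant_K2m m) h 4" if "h \<le> 1" for h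
    using adj_pendant_K2m_hub[of 0 m] adj_pendant_K2m_hub[of 1 m] assms that
    by (auto simp: le_Suc_eq numeral_eq_Suc)
  from v(1) show "v \<in> (\<lambda>i. 2*i+3) ` {..<m}"
  proof (cases rule: pendant_K2m_vertex_cases)
    case (3 i)
    then have "adj (pendant_K2m m) v 0" "adj (pendant_K2m m) v 1"
      using adj_pendant_K2m_hub adj_sym by blast+
    then show ?thesis using degree_pendant_K2m_ge_2[of 0 1 m v] v(2) by simp
  qed (use hub degree_pendant_K2m_ge_2[of 2 4 m v] v(2) in auto)
next
  fix v assume "v \<in> (\<lambda>i. 2*i+3) ` {..<m}"
  then show "v \<in> leaves (pendant_K2m m)"
    unfolding leaves_def using degree_pendant_K2m_leaf by auto
qed

lemma verts_delete_leaves_pendant_K2m: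
  assumes "m \<ge> 2"
  shows "v \<in> verts (delete_leaves (pendant_K2m m)) \<longleftrightarrow> v \<le> 1 \<or> (\<exists>i<m. v = 2*i+2)"
proof -
  have "v \<in> verts (delete_leaves (pendant_K2m m)) \<longleftrightarrow> v < 2*m+2 \<and> (\<forall>i<m. v \<noteq> 2*i+3)"
    unfolding delete_leaves_def leaves_pendant_K2m[OF assms] by auto
  also have "\<dots> \<longleftrightarrow> v \<le> 1 \<or> (\<exists>i<m. v = 2*i+2)"
  proof
    assume v: "v < 2*m+2 \<and> (\<forall>i<m. v \<noteq> 2*i+3)"
    then have "v < 2*m+2" ..
    then show "v \<le> 1 \<or> (\<exists>i<m. v = 2*i+2)"
    proof (cases rule: pendant_K2m_vertex_cases)
      case (4 i)
      with v show ?thesis by blast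
    qed auto
  qed presburger
  finally show ?thesis .
qed

lemma connected_hub_subgraph:
  assumes core: "\<forall>v\<in>verts H. v \<le> 1 \<or> (\<exists>i<m. v = 2*i+2)"
    and hub: "h \<in> verts H" "h \<le> 1" and middle: "j < m" "2*j+2 \<in> verts H"
    and adj: "\<And>u v. u \<in> verts H \<Longrightarrow> v \<in> verts H \<Longrightarrow> adj (pendant_K2m m) u v \<Longrightarrow> adj H u v"
  shows "connected H"
proof (rule connectedI_root[OF hub(1)])
  have hub_middle: "(x, 2*k+2) \<in> reach H"
    if "x \<le> 1" "x \<in> verts H" "k < m" "2*k+2 \<in> verts H" for x k
  proof -
    have "adj (pendant_K2m m) x (2*k+2)"
      using adj_pendant_K2m_hub that by (auto simp: le_Suc_eq)
    then show ?thesis using that by (intro reach_edge adj) auto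
  qed
  fix v assume v: "v \<in> verts H"
  with core consider "v \<le> 1" | i where "i < m" "v = 2*i+2" by blast
  then show "(h, v) \<in> reach H"
  proof cases
    case 1
    then have "(v, 2*j+2) \<in> reach H" using hub_middle v middle by blast
    then show ?thesis using hub_middle[OF hub(2,1) middle] reach_sym reach_trans by blast
  next
    case 2
    then show ?thesis using hub_middle hub v by blast
  qed
qed

lemma two_connected_delete_leaves_pendant_K2m:
  assumes m: "m \<ge> 2"
  shows "two_connected (delete_leaves (pendant_K2m m))"
proof -
  define K where "K = delete_leaves (pendant_K2m m)"
  have K_verts: "v \<in> verts K \<longleftrightarrow> v \<le> 1 \<or> (\<exists>i<m. v = 2*i+2)" for v
    unfolding K_def using verts_delete_leaves_pendant_K2m[OF m] .
  have K_adj: "adj K u v" if "u \<in> verts K" "v \<in> verts K" "adj (pendant_K2m m) u v" for u v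
    using that unfolding K_def delete_leaves_def by simp
  have "{0, 1, 2} \<subseteq> verts K"
    using m K_verts[of 2] by (auto simp: K_verts)
  moreover have "finite (verts K)"
    unfolding K_def delete_leaves_def by simp
  ultimately have "card {0::nat, 1, 2} \<le> card (verts K)"
    by (rule card_mono[rotated])
  then have "card (verts K) \<ge> 3" by simp
  moreover have "connected K"
    using m K_verts K_adj by (intro connected_hub_subgraph[where h = 0 and j = 0]) auto
  moreover have "connected (induced K (verts K - {x}))" if x: "x \<in> verts K" for x
  proof -
    let ?H = "induced K (verts K - {x})"
    have core: "\<forall>v\<in>verts ?H. v \<le> 1 \<or> (\<exists>i<m. v = 2*i+2)"
      using K_verts by auto
    have H_adj: "\<And>u v. u \<in> verts ?H \<Longrightarrow> v \<in> verts ?H \<Longrightarrow> adj (pendant_K2m m) u v \<Longrightarrow> adj ?H u v"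
      using K_adj by auto
    from x K_verts consider "x \<le> 1" | k where "k < m" "x = 2*k+2" by blast
    then show ?thesis
    proof cases
      case 1
      then have "1 - x \<le> 1" "1 - x \<noteq> x" by arith+
      then show ?thesis
        by (intro connected_hub_subgraph[OF core, where h = "1 - x" and j = 0])
          (use 1 m K_verts H_adj in auto)
    next
      case 2
      define j where "j = (if k = 0 then 1 else 0::nat)"
      have "j < m" "j \<noteq> k" unfolding j_def using m by auto
      then show ?thesis
        by (intro connected_hub_subgraph[OF core, where h = 0 and j = j])
          (use 2 K_verts H_adj in auto)
    qed
  qed
  ultimately show ?thesis
    unfolding two_connected_def K_def by blast
qed

lemma reach_delete_edge_pendant_K2m:
  "adj (pendant_K2m m) u v \<Longrightarrow> {u, v} \<noteq> d \<Longrightarrow> (u, v) \<in> reach (delete_edge (pendant_K2m m) d)"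
  using adj_pendant_K2m_verts by (intro reach_delete_edge) auto

lemma reach_hubs_delete_edge_pendant_K2m:
  assumes "m \<ge> 2"
  shows "(0, 1) \<in> reach (delete_edge (pendant_K2m m) d)"
proof -
  \<comment> \<open>d lies on at most one of the paths 0, 2j+2, 1 with j = 0, 1\<close>
  obtain j where j: "j < m" "d \<noteq> {0, 2*j+2}" "d \<noteq> {2*j+2, 1}"
  proof (cases "d = {0, 2} \<or> d = {2, 1}")
    case True
    with assms that[of 1] show ?thesis by (auto simp: doubleton_eq_iff)
  next
    case False
    show ?thesis by (rule that[of 0]) (use assms False in auto)
  qed
  have "(0, 2*j+2) \<in> reach (delete_edge (pendant_K2m m) d)"
    using j by (intro reach_delete_edge_pendant_K2m adj_pendant_K2m_hub) auto
  moreover have "(2*j+2, 1) \<in> reach (delete_edge (pendant_K2m m) d)"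
    using j adj_pendant_K2m_hub(2) adj_sym by (intro reach_delete_edge_pendant_K2m) auto
  ultimately show ?thesis by (rule reach_trans)
qed

lemma reach_middle_delete_edge_pendant_K2m:
  assumes "m \<ge> 2" "i < m"
  shows "(0, 2*i+2) \<in> reach (delete_edge (pendant_K2m m) d)"
proof (cases "d = {0, 2*i+2}")
  case True
  then have "(1, 2*i+2) \<in> reach (delete_edge (pendant_K2m m) d)"
    using assms by (intro reach_delete_edge_pendant_K2m adj_pendant_K2m_hub) (auto simp: doubleton_eq_iff)
  then show ?thesis
    using reach_hubs_delete_edge_pendant_K2m[OF assms(1)] reach_trans by blast
next
  case False
  then show ?thesis
    using assms by (intro reach_delete_edge_pendant_K2m adj_pendant_K2m_hub) auto
qed

lemma reach_endpoint_delete_edge_pendant_K2m: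
  assumes m: "m \<ge> 2" and e: "e \<in> pendant_K2m_edges m - {d}" and "u \<in> e"
  shows "(0, u) \<in> reach (delete_edge (pendant_K2m m) d)"
proof -
  from e obtain i where i: "i < m" and "e \<noteq> d"
    and "e = {0, 2*i+2} \<or> e = {1, 2*i+2} \<or> e = {2*i+2, 2*i+3}"
    by (auto simp: mem_pendant_K2m_edges)
  then consider "u = 0" | "u = 1" | "u = 2*i+2" | "u = 2*i+3" "d \<noteq> {2*i+2, 2*i+3}"
    using \<open>u \<in> e\<close> by blast
  then show ?thesis
  proof cases
    case 4
    have "(2*i+2, 2*i+3) \<in> reach (delete_edge (pendant_K2m m) d)"
      using i 4 adj_pendant_K2m_leaf adj_sym by (intro reach_delete_edge_pendant_K2m) auto
    with 4 show ?thesis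
      using reach_middle_delete_edge_pendant_K2m[OF m i] reach_trans by blast
  qed (use reach_refl reach_hubs_delete_edge_pendant_K2m[OF m]
        reach_middle_delete_edge_pendant_K2m[OF m i] in auto)
qed

lemma connected_pendant_K2m:
  assumes m: "m \<ge> 2"
  shows "connected (pendant_K2m m)"
proof -
  have "delete_edge (pendant_K2m m) {} = pendant_K2m m"
    by (rule delete_edge_non_edge[OF empty_not_edge[OF is_graph_pendant_K2m]])
  moreover have "connected (delete_edge (pendant_K2m m) {})"
  proof (rule connectedI_root)
    fix v assume "v \<in> verts (delete_edge (pendant_K2m m) {})"
    then have "v < 2*m+2" by simp
    then show "(0, v) \<in> reach (delete_edge (pendant_K2m m) {})"
    proof (cases rule: pendant_K2m_vertex_cases)
      case (4 i)
      then have "{2*i+2, 2*i+3} \<in> pendant_K2m_edges m - {{}}"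
        by (auto simp: mem_pendant_K2m_edges)
      with 4 show ?thesis using reach_endpoint_delete_edge_pendant_K2m[OF m] by blast
    qed (use reach_refl reach_hubs_delete_edge_pendant_K2m[OF m]
          reach_middle_delete_edge_pendant_K2m[OF m] in auto)
  qed simp
  ultimately show ?thesis by simp
qed

lemma ess_2_edge_connected_pendant_K2m:
  "m \<ge> 2 \<Longrightarrow> ess_2_edge_connected (pendant_K2m m)"
  using reach_endpoint_delete_edge_pendant_K2m
  by (intro ess_2_edge_connectedI[OF is_graph_pendant_K2m] exI[of _ 0]) auto

lemma square_pendant_K2m_edge_at_leaf:
  assumes "i < m" "e \<in> edges (square (pendant_K2m m))" "2*i+3 \<in> e"
  obtains h where "e = {2*i+3, h}" "h \<in> {0, 1, 2*i+2}"
proof -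
  have "\<exists>w. e = {2*i+3, w} \<and> (w = 2*i+2 \<or> adj (pendant_K2m m) (2*i+2) w)"
    using assms adj_pendant_K2m_leaf by (intro square_edge_at_pendant) auto
  then obtain w where "e = {2*i+3, w}" "w = 2*i+2 \<or> w = 0 \<or> w = 1 \<or> w = 2*i+3"
    using adj_pendant_K2m_middle by blast
  moreover have "w \<noteq> 2*i+3"
    using \<open>e = {2*i+3, w}\<close> assms(2) unfolding edges_square doubleton_eq_iff by auto
  ultimately show ?thesis using that by auto
qed

lemma no_two_2s_factor_square_pendant_K2m:
  assumes "4*s < m"
  shows "\<not> two_2s_factor s F (square (pendant_K2m m))"
proof
  assume F: "two_2s_factor s F (square (pendant_K2m m))"
  have F_edges: "edges F \<subseteq> edges (square (pendant_K2m m))"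
    using F unfolding two_2s_factor_def connected_even_factor_def is_factor_def by blast
  then have fin: "finite (edges F)"
    using finite_edges_square[of "pendant_K2m m"] finite_subset by auto
  have "\<exists>h\<in>{0, 1}. {2*i+3, h} \<in> edges F" if i: "i < m" for i
  proof (rule ccontr)
    assume "\<not> ?thesis"
    then have "{e \<in> edges F. 2*i+3 \<in> e} \<subseteq> {{2*i+3, 2*i+2}}"
      using square_pendant_K2m_edge_at_leaf[OF i] F_edges by blast
    then have "degree F (2*i+3) \<le> 1"
      using degree_le_card[of "{{2*i+3, 2*i+2}}"] by simp
    moreover have "2 \<le> degree F (2*i+3)"
      using two_2s_factor_degree(1)[OF F] i by simp
    ultimately show False by simp
  qed
  then obtain h where h: "\<And>i. i < m \<Longrightarrow> h i \<in> {0, 1} \<and> {2*i+3, h i} \<in> edges F"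
    by metis
  have "inj_on (\<lambda>i. {2*i+3, h i}) {..<m}"
    using h by (fastforce simp: inj_on_def doubleton_eq_iff)
  then have "m = card ((\<lambda>i. {2*i+3, h i}) ` {..<m})"
    by (simp add: card_image)
  also have "\<dots> \<le> card ({e \<in> edges F. 0 \<in> e} \<union> {e \<in> edges F. 1 \<in> e})"
  proof (rule card_mono)
    show "(\<lambda>i. {2*i+3, h i}) ` {..<m} \<subseteq> {e \<in> edges F. 0 \<in> e} \<union> {e \<in> edges F. 1 \<in> e}"
    proof (rule image_subsetI)
      fix i assume "i \<in> {..<m}"
      with h[of i] show "{2*i+3, h i} \<in> {e \<in> edges F. 0 \<in> e} \<union> {e \<in> edges F. 1 \<in> e}"
        by auto
    qed
  qed (use fin in simp)
  also have "\<dots> \<le> degree F 0 + degree F 1"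
    unfolding degree_def by (rule card_Un_le)
  also have "\<dots> \<le> 4*s"
    using two_2s_factor_degree(2)[OF F, of 0] two_2s_factor_degree(2)[OF F, of 1] by simp
  finally show False
    using assms by simp
qed

lemma graph_iso_pendant_K2m: "graph_iso (pendant_K2m m) (pendant_K2m n) \<Longrightarrow> m = n"
  using graph_iso_card_verts[of "pendant_K2m m" "pendant_K2m n"] by simp

theorem theorem4:
  fixes s :: nat
  assumes "s \<ge> 1"
  shows "\<exists>\<G> :: graph set. infinite \<G> \<and>
           (\<forall>G\<in>\<G>. \<forall>H\<in>\<G>. G \<noteq> H \<longrightarrow> \<not> graph_iso G H) \<and>
           (\<forall>G\<in>\<G>. is_graph G \<and> connected G \<and> ess_2_edge_connected G \<and>
              two_connected (delete_leaves G) \<and>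
              \<not> (\<exists>F. two_2s_factor s F (square G)))"
proof (intro exI conjI)
  let ?\<G> = "pendant_K2m ` {4*s<..}"
  have "inj pendant_K2m"
    using graph_iso_pendant_K2m graph_iso_refl by (metis injI)
  then show "infinite ?\<G>"
    by (simp add: finite_image_iff inj_on_subset infinite_Ioi)
  show "\<forall>G\<in>?\<G>. \<forall>H\<in>?\<G>. G \<noteq> H \<longrightarrow> \<not> graph_iso G H"
    using graph_iso_pendant_K2m by blast
  show "\<forall>G\<in>?\<G>. is_graph G \<and> connected G \<and> ess_2_edge_connected G \<and>
      two_connected (delete_leaves G) \<and> \<not> (\<exists>F. two_2s_factor s F (square G))"
  proof
    fix G assume "G \<in> ?\<G>"
    then obtain m where m: "4*s < m" and G: "G = pendant_K2m m" by blast
    with assms have "m \<ge> 2" by simp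
    with m show "is_graph G \<and> connected G \<and> ess_2_edge_connected G \<and>
        two_connected (delete_leaves G) \<and> \<not> (\<exists>F. two_2s_factor s F (square G))"
      unfolding G
      by (simp add: is_graph_pendant_K2m connected_pendant_K2m ess_2_edge_connected_pendant_K2m
          two_connected_delete_leaves_pendant_K2m no_two_2s_factor_square_pendant_K2m)
  qed
qed

end
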